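(* Let $n\ge1$, let $\mathbf{Q}\in\mathbb{R}^{n\times n}$ be symmetric, $\mathbf{c}\in\mathbb{R}^n$, $\mathbf{v}\in\mathbb{R}^n_+$, $V_c>0$. Let $\mathcal{Z}_a=\{\mathbf{z}\in\{0,1\}^n:\ \mathbf{v}^T\mathbf{z}\le V_c\}$, $\mathcal{Z}_b=\{\mathbf{z}\in\mathbb{R}^n:\ \mathbf{v}^T\mathbf{z}\le V_c\}$, $P_q(\mathbf{z})=\tfrac12\mathbf{z}^T\mathbf{Q}\mathbf{z}-\mathbf{c}^T\mathbf{z}$, and for $\beta>0$, $P_\beta(\mathbf{z})=P_q(\mathbf{z})+\tfrac12\beta\|\mathbf{z}\circ\mathbf{z}-\mathbf{z}\|^2$. For $\boldsymbol{\zeta}=(\boldsymbol{\sigma},\tau)$ put $\mathbf{G}(\boldsymbol{\sigma})=\mathbf{Q}+2\,\mathrm{Diag}(\boldsymbol{\sigma})$, $\boldsymbol{\psi}(\boldsymbol{\zeta})=\mathbf{c}-\tau\mathbf{v}+\boldsymbol{\sigma}$, $\mathcal{S}_a^+=\{(\boldsymbol{\sigma},\tau)\in\mathbb{R}^{n+1}:\ \mathbf{G}(\boldsymbol{\sigma})\succ0,\ \tau>0\}$, $$\Xi_\beta(\mathbf{z},\boldsymbol{\zeta})=\tfrac12\mathbf{z}^T\mathbf{G}(\boldsymbol{\sigma})\mathbf{z}-\tfrac12\beta^{-1}\|\boldsymbol{\sigma}\|^2-\mathbf{z}^T\boldsymbol{\psi}(\boldsymbol{\zeta})-\tau V_c,$$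 $$P^d_\beta(\boldsymbol{\zeta})=-\tfrac12\boldsymbol{\psi}(\boldsymbol{\zeta})^T\mathbf{G}(\boldsymbol{\sigma})^{-1}\boldsymbol{\psi}(\boldsymbol{\zeta})-\tfrac12\beta^{-1}\|\boldsymbol{\sigma}\|^2-\tau V_c,\qquad P^d_q(\boldsymbol{\zeta})=-\tfrac12\boldsymbol{\psi}(\boldsymbol{\zeta})^T\mathbf{G}(\boldsymbol{\sigma})^{-1}\boldsymbol{\psi}(\boldsymbol{\zeta})-\tau V_c .$$ For any $\beta>0$, if $\boldsymbol{\zeta}_\beta=(\boldsymbol{\sigma}_\beta,\tau_\beta)\in\mathcal{S}_a^+$ is a solution of $\max\{P^d_\beta(\boldsymbol{\zeta}):\boldsymbol{\zeta}\in\mathcal{S}_a^+\}$, then $\mathbf{z}_\beta=\mathbf{G}(\boldsymbol{\sigma}_\beta)^{-1}\boldsymbol{\psi}(\boldsymbol{\zeta}_\beta)$ is a global minimizer of $P_\beta$ over $\mathcal{Z}_b$. Moreover, there exists $\beta_c>0$ such that if $\beta\ge\beta_c$ and $\mathbf{z}_\beta\in\mathcal{Z}_a$, then $\mathbf{z}_\beta$ is a global minimizer of $P_q$ over $\mathcal{Z}_a$ and $$P_q(\mathbf{z}_\beta)=\min_{\mathbf{z}\in\mathcal{Z}_b}P_\beta(\mathbf{z})=\Xi_\beta(\mathbf{z}_\beta,\boldsymbol{\zeta}_\beta)=\max_{\boldsymbol{\zeta}\in\mathcal{S}_a^+}P^d_\beta(\boldsymbol{\zeta})=P^d_q(\bo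ldsymbol{\zeta}_\beta).$$
   Context: $\mathbf{z}\circ\mathbf{z}=\{z_i^2\}$ is the componentwise square; $\mathrm{Diag}(\boldsymbol{\sigma})$ is the diagonal matrix with diagonal $\boldsymbol{\sigma}$. The problem $\min\{P_q(\mathbf{z}):\mathbf{z}\in\mathcal{Z}_a\}$ is the quadratic knapsack problem. *)

theory Defs
  imports "HOL-Analysis.Analysis"
begin

definition pos_def :: "real^'n^'n \<Rightarrow> bool" where
  "pos_def G \<longleftrightarrow> (\<forall>x. x \<noteq> 0 \<longrightarrow> 0 < x \<bullet> (G *v x))"

definition Diag :: "real^'n \<Rightarrow> real^'n^'n" where
  "Diag s = (\<chi> i j. if i = j then s $ i else 0)"

definition csq :: "real^'n \<Rightarrow> real^'n" where
  "csq z = (\<chi> i. (z $ i)^2)"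

definition Za :: "real^'n \<Rightarrow> real \<Rightarrow> (real^'n) set" where
  "Za v Vc = {z. (\<forall>i. z $ i \<in> {0, 1}) \<and> v \<bullet> z \<le> Vc}"

definition Zb :: "real^'n \<Rightarrow> real \<Rightarrow> (real^'n) set" where
  "Zb v Vc = {z. v \<bullet> z \<le> Vc}"

definition Pq :: "real^'n^'n \<Rightarrow> real^'n \<Rightarrow> real^'n \<Rightarrow> real" where
  "Pq Q c z = (1/2) * (z \<bullet> (Q *v z)) - c \<bullet> z"

definition Pbeta :: "real^'n^'n \<Rightarrow> real^'n \<Rightarrow> real \<Rightarrow> real^'n \<Rightarrow> real" where
  "Pbeta Q c \<beta> z = Pq Q c z + (1/2) * \<beta> * (norm (csq z - z))^2"

definition Gm :: "real^'n^'n \<Rightarrow> real^'n \<Rightarrow> real^'n^'n" where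
  "Gm Q \<sigma> = Q + 2 *\<^sub>R Diag \<sigma>"

definition psi :: "real^'n \<Rightarrow> real^'n \<Rightarrow> (real^'n) \<times> real \<Rightarrow> real^'n" where
  "psi c v \<zeta> = c - snd \<zeta> *\<^sub>R v + fst \<zeta>"

definition Sa_plus :: "real^'n^'n \<Rightarrow> ((real^'n) \<times> real) set" where
  "Sa_plus Q = {(\<sigma>, \<tau>). pos_def (Gm Q \<sigma>) \<and> \<tau> > 0}"

definition Xi :: "real^'n^'n \<Rightarrow> real^'n \<Rightarrow> real^'n \<Rightarrow> real \<Rightarrow> real \<Rightarrow> real^'n \<Rightarrow> (real^'n) \<times> real \<Rightarrow> real" where
  "Xi Q c v Vc \<beta> z \<zeta> = (1/2) * (z \<bullet> (Gm Q (fst \<zeta>) *v z)) - (1/2) * inverse \<beta> * (norm (fst \<zeta>))^2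
      - z \<bullet> psi c v \<zeta> - snd \<zeta> * Vc"

definition Pd_beta :: "real^'n^'n \<Rightarrow> real^'n \<Rightarrow> real^'n \<Rightarrow> real \<Rightarrow> real \<Rightarrow> (real^'n) \<times> real \<Rightarrow> real" where
  "Pd_beta Q c v Vc \<beta> \<zeta> = - (1/2) * (psi c v \<zeta> \<bullet> (matrix_inv (Gm Q (fst \<zeta>)) *v psi c v \<zeta>))
      - (1/2) * inverse \<beta> * (norm (fst \<zeta>))^2 - snd \<zeta> * Vc"

definition Pd_q :: "real^'n^'n \<Rightarrow> real^'n \<Rightarrow> real^'n \<Rightarrow> real \<Rightarrow> (real^'n) \<times> real \<Rightarrow> real" where
  "Pd_q Q c v Vc \<zeta> = - (1/2) * (psi c v \<zeta> \<bullet> (matrix_inv (Gm Q (fst \<zeta>)) *v psi c v \<zeta>)) - snd \<zeta> * Vc"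

definition zdual :: "real^'n^'n \<Rightarrow> real^'n \<Rightarrow> real^'n \<Rightarrow> (real^'n) \<times> real \<Rightarrow> real^'n" where
  "zdual Q c v \<zeta> = matrix_inv (Gm Q (fst \<zeta>)) *v psi c v \<zeta>"

definition is_min_on :: "('a \<Rightarrow> real) \<Rightarrow> 'a set \<Rightarrow> 'a \<Rightarrow> bool" where
  "is_min_on f S x \<longleftrightarrow> x \<in> S \<and> (\<forall>y\<in>S. f x \<le> f y)"

definition is_max_on :: "('a \<Rightarrow> real) \<Rightarrow> 'a set \<Rightarrow> 'a \<Rightarrow> bool" where
  "is_max_on f S x \<longleftrightarrow> x \<in> S \<and> (\<forall>y\<in>S. f y \<le> f x)"

end

theory Submission
  imports Defs
begin

text \<open>
  \<open>Xi\<close> is a Lagrangian: for \<open>\<tau> \<ge> 0\<close> and \<open>y \<in> Zb\<close> the Fenchel-Young inequality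
  \<open>\<sigma>\<^sup>T d \<le> \<parallel>\<sigma>\<parallel>\<^sup>2/(2\<beta>) + \<beta>\<parallel>d\<parallel>\<^sup>2/2\<close> gives \<open>Xi(y,\<zeta>) \<le> P\<^sub>\<beta>(y)\<close>, and when
  \<open>G(\<sigma>) \<succ> 0\<close> completing the square in \<open>y\<close> gives \<open>P\<^sup>d\<^sub>\<beta>(\<zeta>) = Xi(z\<^sub>\<zeta>,\<zeta>) \<le> Xi(y,\<zeta>)\<close>.
  At a maximiser \<open>\<zeta>\<close> of \<open>P\<^sup>d\<^sub>\<beta>\<close> on the open set \<open>S\<^sub>a\<^sup>+\<close> the first-order conditions are
  \<open>\<sigma> = \<beta>(z\<^sub>\<zeta>\<circ>z\<^sub>\<zeta> - z\<^sub>\<zeta>)\<close> and \<open>v\<^sup>T z\<^sub>\<zeta> = V\<^sub>c\<close>; they are exactly the equality cases of both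
  inequalities at \<open>y = z\<^sub>\<zeta>\<close>, so \<open>P\<^sub>\<beta>(z\<^sub>\<zeta>) = P\<^sup>d\<^sub>\<beta>(\<zeta>) \<le> P\<^sub>\<beta>(y)\<close>. They are derived without
  differentiating \<open>G(\<sigma>)\<^sup>-\<^sup>1\<close>: perturbing \<open>\<zeta>\<close> to \<open>\<zeta>'\<close>, the dual value \<open>P\<^sup>d\<^sub>\<beta>(\<zeta>')\<close> exceeds
  \<open>Xi(z\<^sub>\<zeta>,\<zeta>')\<close> minus a residual that is quadratic in the perturbation, so the
  directional derivatives of the explicit function \<open>Xi(z\<^sub>\<zeta>,\<cdot>)\<close> must vanish.
  If moreover \<open>z\<^sub>\<zeta>\<close> is binary then \<open>\<sigma> = 0\<close>, all penalty terms vanish, and the values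
  collapse to \<open>P\<^sub>q(z\<^sub>\<zeta>)\<close> and \<open>P\<^sup>d\<^sub>q(\<zeta>)\<close>.
\<close>

lemma inner_matrix_vector_symmetric:
  fixes G :: "real^'n^'n"
  assumes "transpose G = G"
  shows "x \<bullet> (G *v y) = y \<bullet> (G *v x)"
  by (metis assms dot_lmul_matrix inner_commute vector_transpose_matrix)

lemma matrix_inv_right:
  fixes A :: "'a::field^'n^'n"
  assumes "invertible A"
  shows "A ** matrix_inv A = mat 1"
  using assms unfolding invertible_def matrix_inv_def
  by (rule someI_ex[where P = "\<lambda>B. A ** B = mat 1 \<and> B ** A = mat 1", THEN conjunct1])

lemma pos_def_invertible:
  assumes "pos_def G"
  shows "invertible G"
proof -
  have "x = 0" if "G *v x = 0" for x
    using assms that unfolding pos_def_def by fastforce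
  then show ?thesis
    by (simp add: invertible_left_inverse matrix_left_invertible_ker)
qed

lemma pos_def_matrix_inv_solves:
  assumes "pos_def G"
  shows "G *v (matrix_inv G *v p) = p"
  by (simp add: matrix_vector_mul_assoc matrix_inv_right pos_def_invertible assms)

lemma pos_def_coercive:
  fixes G :: "real^'n^'n"
  assumes "pos_def G"
  obtains \<mu> where "0 < \<mu>" "\<And>w. \<mu> * (norm w)^2 \<le> w \<bullet> (G *v w)"
proof -
  have "continuous_on (sphere 0 1) (\<lambda>w::real^'n. w \<bullet> (G *v w))"
    by (intro continuous_intros linear_continuous_on matrix_vector_mul_linear)
  then obtain u where u: "norm u = 1" and min: "\<And>w. norm w = 1 \<Longrightarrow> u \<bullet> (G *v u) \<le> w \<bullet> (G *v w)"
    using continuous_attains_inf[OF compact_sphere, of 0 1] by fastforce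
  have "u \<bullet> (G *v u) * (norm w)^2 \<le> w \<bullet> (G *v w)" for w
  proof (cases "w = 0")
    case False
    define e where "e = (1 / norm w) *\<^sub>R w"
    have "w \<bullet> (G *v w) = (norm w)^2 * (e \<bullet> (G *v e))"
      using False by (simp add: e_def matrix_vector_mult_scaleR power2_eq_square)
    moreover have "u \<bullet> (G *v u) \<le> e \<bullet> (G *v e)"
      using False by (intro min) (simp add: e_def)
    ultimately show ?thesis by (simp add: mult.commute mult_right_mono)
  qed simp
  moreover have "0 < u \<bullet> (G *v u)"
    using assms u unfolding pos_def_def by (metis norm_zero zero_neq_one)
  ultimately show ?thesis using that by blast
qed

lemma coercive_imp_pos_def:
  assumes "0 < \<mu>" "\<And>w. \<mu> * (norm w)^2 \<le> w \<bullet> (G *v w)"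
  shows "pos_def G"
  unfolding pos_def_def using assms by (metis less_le_trans mult_pos_pos zero_less_norm_iff zero_less_power)

lemma coercive_quadratic_form_le:
  fixes G :: "real^'n^'n"
  assumes "0 < \<mu>" "\<And>w. \<mu> * (norm w)^2 \<le> w \<bullet> (G *v w)"
  shows "\<mu> * (d \<bullet> (G *v d)) \<le> (norm (G *v d))^2"
proof (cases "d = 0")
  case False
  have cs: "d \<bullet> (G *v d) \<le> norm d * norm (G *v d)"
    by (rule norm_cauchy_schwarz)
  then have "norm d * (\<mu> * norm d) \<le> norm d * norm (G *v d)"
    using assms(2)[of d] by (simp add: power2_eq_square mult_ac)
  then have "\<mu> * norm d \<le> norm (G *v d)"
    using False by simp
  then have "\<mu> * (norm d * norm (G *v d)) \<le> (norm (G *v d))^2"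
    by (simp add: power2_eq_square mult.assoc[symmetric] mult_right_mono)
  then show ?thesis
    using cs assms(1) by (meson mult_left_mono less_imp_le order_trans)
qed simp

lemma quadratic_completion:
  fixes G :: "real^'n^'n"
  assumes "transpose G = G" and "G *v z0 = p"
  shows "(1/2) * (z \<bullet> (G *v z)) - z \<bullet> p
    = - (1/2) * (p \<bullet> z0) + (1/2) * ((z - z0) \<bullet> (G *v (z - z0)))"
  using assms inner_matrix_vector_symmetric[OF assms(1), of z0 z]
  by (simp add: inner_diff_left inner_diff_right matrix_vector_mult_diff_distrib inner_commute algebra_simps)

lemma inner_le_weighted_squares:
  fixes x y :: "'a::real_inner"
  assumes "0 < \<beta>"
  shows "x \<bullet> y \<le> (1/2) * inverse \<beta> * (norm x)^2 + (1/2) * \<beta> * (norm y)^2"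
proof -
  have "(norm (x - \<beta> *\<^sub>R y))^2 = (norm x)^2 - 2 * \<beta> * (x \<bullet> y) + \<beta>^2 * (norm y)^2"
    unfolding power2_norm_eq_inner
    by (simp add: inner_diff_left inner_diff_right inner_commute power2_eq_square)
  then have "2 * \<beta> * (x \<bullet> y) \<le> (norm x)^2 + \<beta>^2 * (norm y)^2"
    using zero_le_power2[of "norm (x - \<beta> *\<^sub>R y)"] by linarith
  then show ?thesis
    using assms by (simp add: field_simps power2_eq_square)
qed

lemma nonpos_if_le_linear:
  fixes g C \<delta> :: real
  assumes "0 < \<delta>" "0 \<le> C" "\<And>h. 0 < h \<Longrightarrow> h < \<delta> \<Longrightarrow> g \<le> C * h"
  shows "g \<le> 0"
proof (rule field_le_epsilon)
  fix e :: real assume "0 < e"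
  define h where "h = min (\<delta> / 2) (e / (C + 1))"
  have "0 < h" "h < \<delta>" using \<open>0 < e\<close> assms(1,2) by (auto simp: h_def)
  then have "g \<le> C * h" by (rule assms(3))
  also have "\<dots> \<le> C * (e / (C + 1))" using assms(2) by (intro mult_left_mono) (auto simp: h_def)
  also have "\<dots> \<le> e" using assms(2) \<open>0 < e\<close> by (simp add: field_simps)
  finally show "g \<le> 0 + e" by simp
qed

lemma zero_if_le_quadratic:
  fixes g C \<delta> :: real
  assumes "0 < \<delta>" "0 \<le> C" "\<And>h. \<bar>h\<bar> < \<delta> \<Longrightarrow> h * g \<le> C * h^2"
  shows "g = 0"
proof -
  have "g \<le> C * h" if "0 < h" "h < \<delta>" for h
    using assms(3)[of h] that by (simp add: power2_eq_square)
  moreover have "- g \<le> C * h" if "0 < h" "h < \<delta>" for h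
  proof -
    have "h * (- g) \<le> h * (C * h)"
      using assms(3)[of "- h"] that by (simp add: power2_eq_square mult_ac)
    then show ?thesis
      using that(1) mult_le_cancel_left_pos[of h "- g" "C * h"] by simp
  qed
  ultimately show ?thesis
    using nonpos_if_le_linear[OF assms(1,2), of g] nonpos_if_le_linear[OF assms(1,2), of "- g"] by simp
qed

lemma Diag_mult_vector: "Diag s *v w = (\<chi> i. s $ i * w $ i)"
  by (simp add: Diag_def matrix_vector_mult_def vec_eq_iff if_distrib[where f = "\<lambda>x. x * _"]
      sum.delta cong: if_cong)

lemma inner_Gm: "w \<bullet> (Gm Q s *v w) = w \<bullet> (Q *v w) + 2 * (s \<bullet> csq w)"
proof -
  have "w \<bullet> (Diag s *v w) = s \<bullet> csq w"
    by (simp add: Diag_mult_vector csq_def inner_vec_def power2_eq_square mult_ac)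
  then show ?thesis
    by (simp add: Gm_def matrix_vector_mult_add_rdistrib inner_add_right
        scaleR_matrix_vector_assoc[symmetric])
qed

lemma transpose_Gm: "transpose Q = Q \<Longrightarrow> transpose (Gm Q s) = Gm Q s"
  by (simp add: Gm_def transpose_def Diag_def vec_eq_iff)

lemma Xi_eq_Lagrangian:
  "Xi Q c v Vc \<beta> z \<zeta> = Pq Q c z + fst \<zeta> \<bullet> (csq z - z) - (1/2) * inverse \<beta> * (norm (fst \<zeta>))^2
    + snd \<zeta> * (v \<bullet> z - Vc)"
  by (simp add: Xi_def inner_Gm psi_def Pq_def inner_diff_right inner_add_right algebra_simps inner_commute)

lemma Gm_zdual:
  "pos_def (Gm Q (fst \<zeta>)) \<Longrightarrow> Gm Q (fst \<zeta>) *v zdual Q c v \<zeta> = psi c v \<zeta>"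
  by (simp add: zdual_def pos_def_matrix_inv_solves)

lemma Pd_beta_eq_Xi_zdual:
  "pos_def (Gm Q (fst \<zeta>)) \<Longrightarrow> Pd_beta Q c v Vc \<beta> \<zeta> = Xi Q c v Vc \<beta> (zdual Q c v \<zeta>) \<zeta>"
  using Gm_zdual[of Q \<zeta> c v] by (simp add: Pd_beta_def Xi_def zdual_def inner_commute)

lemma Pd_beta_le_Xi:
  assumes "transpose Q = Q" and "pos_def (Gm Q (fst \<zeta>))"
  shows "Pd_beta Q c v Vc \<beta> \<zeta> \<le> Xi Q c v Vc \<beta> y \<zeta>"
proof -
  let ?d = "y - zdual Q c v \<zeta>"
  have "0 \<le> ?d \<bullet> (Gm Q (fst \<zeta>) *v ?d)"
    using assms(2) unfolding pos_def_def by (cases "?d = 0") (auto intro: less_imp_le)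
  then show ?thesis
    using quadratic_completion[OF transpose_Gm[OF assms(1)] Gm_zdual[OF assms(2)], of y]
    by (simp add: Xi_def Pd_beta_def zdual_def)
qed

lemma Xi_minus_residual_le_Pd_beta:
  assumes "transpose Q = Q" and "0 < \<mu>" "\<And>w. \<mu> * (norm w)^2 \<le> w \<bullet> (Gm Q (fst \<zeta>) *v w)"
  shows "Xi Q c v Vc \<beta> z \<zeta> - (norm (Gm Q (fst \<zeta>) *v z - psi c v \<zeta>))^2 / (2 * \<mu>)
    \<le> Pd_beta Q c v Vc \<beta> \<zeta>"
proof -
  let ?G = "Gm Q (fst \<zeta>)" and ?d = "z - zdual Q c v \<zeta>"
  have sol: "?G *v zdual Q c v \<zeta> = psi c v \<zeta>"
    using Gm_zdual coercive_imp_pos_def[OF assms(2,3)] by blast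
  then have "?G *v z - psi c v \<zeta> = ?G *v ?d"
    by (simp add: matrix_vector_mult_diff_distrib)
  then have "(1/2) * (?d \<bullet> (?G *v ?d)) \<le> (norm (?G *v z - psi c v \<zeta>))^2 / (2 * \<mu>)"
    using coercive_quadratic_form_le[OF assms(2,3), of ?d] assms(2) by (simp add: field_simps)
  then show ?thesis
    using quadratic_completion[OF transpose_Gm[OF assms(1)] sol, of z]
    by (simp add: Xi_def Pd_beta_def zdual_def)
qed

lemma Xi_le_Pbeta:
  assumes "0 < \<beta>" "0 \<le> snd \<zeta>" "y \<in> Zb v Vc"
  shows "Xi Q c v Vc \<beta> y \<zeta> \<le> Pbeta Q c \<beta> y"
proof -
  have "fst \<zeta> \<bullet> (csq y - y) \<le> (1/2) * inverse \<beta> * (norm (fst \<zeta>))^2 + (1/2) * \<beta> * (norm (csq y - y))^2"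
    using inner_le_weighted_squares[OF assms(1)] .
  moreover have "snd \<zeta> * (v \<bullet> y - Vc) \<le> 0"
    using assms(2,3) by (simp add: Zb_def mult_nonneg_nonpos)
  ultimately show ?thesis
    by (simp add: Xi_eq_Lagrangian Pbeta_def)
qed

lemma Pbeta_eq_Xi:
  assumes "0 < \<beta>" "fst \<zeta> = \<beta> *\<^sub>R (csq z - z)" "v \<bullet> z = Vc"
  shows "Pbeta Q c \<beta> z = Xi Q c v Vc \<beta> z \<zeta>"
proof -
  have "fst \<zeta> \<bullet> (csq z - z) = \<beta> * (norm (csq z - z))^2"
    by (simp add: assms(2) power2_norm_eq_inner)
  moreover have "(norm (fst \<zeta>))^2 = \<beta>^2 * (norm (csq z - z))^2"
    by (simp add: assms(2) power_mult_distrib)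
  ultimately show ?thesis
    using assms(1,3) by (simp add: Xi_eq_Lagrangian Pbeta_def power2_eq_square)
qed

text \<open>This bound stands in for a first-order expansion of \<open>Pd_beta\<close> at a maximiser.\<close>

lemma Pd_beta_max_perturbation:
  assumes "transpose Q = Q" and max: "is_max_on (Pd_beta Q c v Vc \<beta>) (Sa_plus Q) \<zeta>"
    and "0 < \<mu>" "\<And>w. \<mu> * (norm w)^2 \<le> w \<bullet> (Gm Q s' *v w)" and "0 < t'"
  defines "z \<equiv> zdual Q c v \<zeta>"
  shows "Xi Q c v Vc \<beta> z (s', t') - (norm (Gm Q s' *v z - psi c v (s', t')))^2 / (2 * \<mu>)
    \<le> Xi Q c v Vc \<beta> z \<zeta>"
proof -
  have "(s', t') \<in> Sa_plus Q"
    using coercive_imp_pos_def[OF assms(3,4)] assms(5) by (simp add: Sa_plus_def)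
  then have "Pd_beta Q c v Vc \<beta> (s', t') \<le> Pd_beta Q c v Vc \<beta> \<zeta>"
    using max by (simp add: is_max_on_def)
  also have "\<dots> = Xi Q c v Vc \<beta> z \<zeta>"
    using max Pd_beta_eq_Xi_zdual by (force simp: is_max_on_def Sa_plus_def z_def)
  finally show ?thesis
    using Xi_minus_residual_le_Pd_beta[of Q \<mu> "(s', t')" c v Vc \<beta> z] assms(1,3,4)
    by (simp add: order_trans)
qed

lemma Pd_beta_max_active_constraint:
  assumes "transpose Q = Q" and max: "is_max_on (Pd_beta Q c v Vc \<beta>) (Sa_plus Q) (s, t)"
  shows "v \<bullet> zdual Q c v (s, t) = Vc"
proof -
  define z where "z = zdual Q c v (s, t)"
  have pd: "pos_def (Gm Q s)" and "0 < t"
    using max by (auto simp: is_max_on_def Sa_plus_def)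
  obtain \<mu> where \<mu>: "0 < \<mu>" "\<And>w. \<mu> * (norm w)^2 \<le> w \<bullet> (Gm Q s *v w)"
    using pos_def_coercive[OF pd] by blast
  have "v \<bullet> z - Vc = 0"
  proof (rule zero_if_le_quadratic[of t "(norm v)^2 / (2 * \<mu>)"])
    fix h :: real assume "\<bar>h\<bar> < t"
    then have "0 < t + h" by linarith
    have "Gm Q s *v z - psi c v (s, t + h) = h *\<^sub>R v"
      using Gm_zdual[of Q "(s, t)" c v] pd by (simp add: z_def psi_def algebra_simps)
    then have "(norm (Gm Q s *v z - psi c v (s, t + h)))^2 = h^2 * (norm v)^2"
      by (simp add: power_mult_distrib)
    moreover have "Xi Q c v Vc \<beta> z (s, t + h) = Xi Q c v Vc \<beta> z (s, t) + h * (v \<bullet> z - Vc)"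
      by (simp add: Xi_eq_Lagrangian algebra_simps)
    ultimately show "h * (v \<bullet> z - Vc) \<le> (norm v)^2 / (2 * \<mu>) * h^2"
      using Pd_beta_max_perturbation[OF assms \<mu> \<open>0 < t + h\<close>]
      by (simp add: z_def mult.commute)
  qed (use \<open>0 < t\<close> \<mu> in auto)
  then show ?thesis by (simp add: z_def)
qed

lemma Gm_add_axis_mult_vector:
  "Gm Q (s + h *\<^sub>R axis i 1) *v w = Gm Q s *v w + (2 * h * w $ i) *\<^sub>R axis i 1"
  by (simp add: Gm_def matrix_vector_mult_add_rdistrib scaleR_matrix_vector_assoc[symmetric]
      Diag_mult_vector vec_eq_iff axis_def algebra_simps)

lemma Gm_add_axis_coercive:
  assumes "\<And>w. \<mu> * (norm w)^2 \<le> w \<bullet> (Gm Q s *v w)" and "\<bar>h\<bar> < \<mu> / 4"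
  shows "\<mu> / 2 * (norm w)^2 \<le> w \<bullet> (Gm Q (s + h *\<^sub>R axis i 1) *v w)"
proof -
  have "w \<bullet> (Gm Q (s + h *\<^sub>R axis i 1) *v w) = w \<bullet> (Gm Q s *v w) + 2 * h * (w $ i)^2"
    by (simp add: Gm_add_axis_mult_vector inner_add_right inner_axis power2_eq_square)
  moreover have "- (2 * h) * (w $ i)^2 \<le> \<mu> / 2 * (w $ i)^2"
    using assms(2) by (intro mult_right_mono) auto
  moreover have "(w $ i)^2 \<le> (norm w)^2"
    using component_le_norm_cart[of w i] by (metis abs_ge_zero power2_abs power_mono)
  then have "\<mu> / 2 * (w $ i)^2 \<le> \<mu> / 2 * (norm w)^2"
    using assms(2) by (intro mult_left_mono) auto
  ultimately show ?thesis
    using assms(1)[of w] by linarith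
qed

lemma Xi_add_axis:
  "Xi Q c v Vc \<beta> z (s + h *\<^sub>R axis i 1, t)
    = Xi Q c v Vc \<beta> z (s, t) + h * ((csq z - z) $ i - inverse \<beta> * s $ i) - inverse \<beta> / 2 * h^2"
proof -
  have "(norm (s + h *\<^sub>R axis i 1))^2 = (norm s)^2 + 2 * h * s $ i + h^2"
    unfolding power2_norm_eq_inner
    by (simp add: inner_add_left inner_add_right inner_axis inner_axis' inner_axis_axis
        power2_eq_square algebra_simps)
  then show ?thesis
    by (simp add: Xi_eq_Lagrangian inner_add_left inner_axis' algebra_simps)
qed

lemma Pd_beta_max_sigma:
  assumes "transpose Q = Q" and "0 < \<beta>" and max: "is_max_on (Pd_beta Q c v Vc \<beta>) (Sa_plus Q) (s, t)"
  defines "z \<equiv> zdual Q c v (s, t)"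
  shows "s = \<beta> *\<^sub>R (csq z - z)"
proof -
  have pd: "pos_def (Gm Q s)" and "0 < t"
    using max by (auto simp: is_max_on_def Sa_plus_def)
  obtain \<mu> where \<mu>: "0 < \<mu>" "\<And>w. \<mu> * (norm w)^2 \<le> w \<bullet> (Gm Q s *v w)"
    using pos_def_coercive[OF pd] by blast
  have "(csq z - z) $ i - inverse \<beta> * s $ i = 0" for i
  proof (rule zero_if_le_quadratic[of "\<mu> / 4" "inverse \<beta> / 2 + (2 * z $ i - 1)^2 / \<mu>"])
    fix h :: real assume h: "\<bar>h\<bar> < \<mu> / 4"
    let ?s' = "s + h *\<^sub>R axis i 1"
    have "Gm Q ?s' *v z - psi c v (?s', t) = (h * (2 * z $ i - 1)) *\<^sub>R axis i 1"
      using Gm_zdual[of Q "(s, t)" c v] pd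
      by (simp add: Gm_add_axis_mult_vector z_def psi_def algebra_simps)
    then have "(norm (Gm Q ?s' *v z - psi c v (?s', t)))^2 = h^2 * (2 * z $ i - 1)^2"
      by (simp add: power_mult_distrib)
    then show "h * ((csq z - z) $ i - inverse \<beta> * s $ i) \<le> (inverse \<beta> / 2 + (2 * z $ i - 1)^2 / \<mu>) * h^2"
      using Pd_beta_max_perturbation[OF assms(1) max, of "\<mu> / 2" ?s' t] Gm_add_axis_coercive[OF \<mu>(2) h]
        \<mu>(1) \<open>0 < t\<close>
      by (simp add: Xi_add_axis z_def algebra_simps)
  qed (use \<mu>(1) assms(2) in auto)
  then show ?thesis
    using assms(2) by (simp add: vec_eq_iff field_simps)
qed

lemma Pd_beta_max_saddle:
  assumes "transpose Q = Q" and "0 < \<beta>" and max: "is_max_on (Pd_beta Q c v Vc \<beta>) (Sa_plus Q) \<zeta>"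
  defines "z \<equiv> zdual Q c v \<zeta>"
  shows "fst \<zeta> = \<beta> *\<^sub>R (csq z - z)"
    and "Pbeta Q c \<beta> z = Xi Q c v Vc \<beta> z \<zeta>"
    and "Pd_beta Q c v Vc \<beta> \<zeta> = Xi Q c v Vc \<beta> z \<zeta>"
    and "is_min_on (Pbeta Q c \<beta>) (Zb v Vc) z"
proof -
  obtain s t where \<zeta>: "\<zeta> = (s, t)" by fastforce
  have pd: "pos_def (Gm Q s)" and "0 < t"
    using max by (auto simp: \<zeta> is_max_on_def Sa_plus_def)
  show \<sigma>: "fst \<zeta> = \<beta> *\<^sub>R (csq z - z)"
    using Pd_beta_max_sigma[OF assms(1,2)] max by (simp add: \<zeta> z_def)
  have active: "v \<bullet> z = Vc"
    using Pd_beta_max_active_constraint[OF assms(1)] max by (simp add: \<zeta> z_def)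
  show Pbeta_Xi: "Pbeta Q c \<beta> z = Xi Q c v Vc \<beta> z \<zeta>"
    by (rule Pbeta_eq_Xi[OF assms(2) \<sigma> active])
  show Pd_Xi: "Pd_beta Q c v Vc \<beta> \<zeta> = Xi Q c v Vc \<beta> z \<zeta>"
    using Pd_beta_eq_Xi_zdual[of Q \<zeta>] pd by (simp add: \<zeta> z_def)
  show "is_min_on (Pbeta Q c \<beta>) (Zb v Vc) z"
    unfolding is_min_on_def
  proof (intro conjI ballI)
    show "z \<in> Zb v Vc" using active by (simp add: Zb_def)
    fix y assume "y \<in> Zb v Vc"
    have "Pbeta Q c \<beta> z = Pd_beta Q c v Vc \<beta> \<zeta>" using Pbeta_Xi Pd_Xi by simp
    also have "\<dots> \<le> Xi Q c v Vc \<beta> y \<zeta>" using Pd_beta_le_Xi[OF assms(1)] pd by (simp add: \<zeta>)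
    also have "\<dots> \<le> Pbeta Q c \<beta> y" using Xi_le_Pbeta[OF assms(2), of "(s, t)" y] \<open>0 < t\<close> \<open>y \<in> Zb v Vc\<close>
      by (simp add: \<zeta>)
    finally show "Pbeta Q c \<beta> z \<le> Pbeta Q c \<beta> y" .
  qed
qed

lemma is_min_on_INF: "is_min_on f S x \<Longrightarrow> (INF y\<in>S. f y) = f x"
  unfolding is_min_on_def by (intro cInf_eq_minimum) auto

lemma is_max_on_SUP: "is_max_on f S x \<Longrightarrow> (SUP y\<in>S. f y) = f x"
  unfolding is_max_on_def by (intro cSup_eq_maximum) auto

lemma is_min_on_subset: "is_min_on f S x \<Longrightarrow> x \<in> T \<Longrightarrow> T \<subseteq> S \<Longrightarrow> is_min_on f T x"
  unfolding is_min_on_def by blast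

lemma is_min_on_cong: "(\<And>y. y \<in> S \<Longrightarrow> f y = g y) \<Longrightarrow> is_min_on f S x \<longleftrightarrow> is_min_on g S x"
  unfolding is_min_on_def by auto

lemma Za_subset_Zb: "Za v Vc \<subseteq> Zb v Vc"
  unfolding Za_def Zb_def by auto

lemma csq_eq_self_Za: "z \<in> Za v Vc \<Longrightarrow> csq z = z"
  unfolding Za_def csq_def by (auto simp: vec_eq_iff power2_eq_square)

lemma Pbeta_eq_Pq_Za: "z \<in> Za v Vc \<Longrightarrow> Pbeta Q c \<beta> z = Pq Q c z"
  by (simp add: Pbeta_def csq_eq_self_Za)

lemma Pd_beta_eq_Pd_q: "fst \<zeta> = 0 \<Longrightarrow> Pd_beta Q c v Vc \<beta> \<zeta> = Pd_q Q c v Vc \<zeta>"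
  by (simp add: Pd_beta_def Pd_q_def)

lemma Pd_beta_max_binary_strong_duality:
  assumes "transpose Q = Q" and "0 < \<beta>" and max: "is_max_on (Pd_beta Q c v Vc \<beta>) (Sa_plus Q) \<zeta>"
    and Za: "zdual Q c v \<zeta> \<in> Za v Vc"
  defines "z \<equiv> zdual Q c v \<zeta>"
  shows "is_min_on (Pq Q c) (Za v Vc) z
    \<and> Pq Q c z = (INF y\<in>Zb v Vc. Pbeta Q c \<beta> y)
    \<and> (INF y\<in>Zb v Vc. Pbeta Q c \<beta> y) = Xi Q c v Vc \<beta> z \<zeta>
    \<and> Xi Q c v Vc \<beta> z \<zeta> = (SUP \<xi>\<in>Sa_plus Q. Pd_beta Q c v Vc \<beta> \<xi>)
    \<and> (SUP \<xi>\<in>Sa_plus Q. Pd_beta Q c v Vc \<beta> \<xi>) = Pd_q Q c v Vc \<zeta>"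
proof -
  note saddle = Pd_beta_max_saddle[OF assms(1,2) max, folded z_def]
  have "fst \<zeta> = 0"
    using saddle(1) Za by (simp add: z_def csq_eq_self_Za)
  moreover have "is_min_on (Pq Q c) (Za v Vc) z"
    using is_min_on_subset[OF saddle(4) Za[folded z_def] Za_subset_Zb]
      is_min_on_cong[of "Za v Vc" "Pbeta Q c \<beta>" "Pq Q c"] Pbeta_eq_Pq_Za by blast
  ultimately show ?thesis
    using saddle Za is_min_on_INF[OF saddle(4)] is_max_on_SUP[OF max]
    by (simp add: z_def Pbeta_eq_Pq_Za Pd_beta_eq_Pd_q)
qed

theorem theorem2:
  fixes Q :: "real^'n^'n" and c v :: "real^'n" and Vc :: real
  assumes symQ: "transpose Q = Q"
    and v_nonneg: "\<forall>i. 0 \<le> v $ i"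
    and Vc_pos: "Vc > 0"
  shows "(\<forall>\<beta> \<zeta>. \<beta> > 0 \<longrightarrow> is_max_on (Pd_beta Q c v Vc \<beta>) (Sa_plus Q) \<zeta> \<longrightarrow>
            is_min_on (Pbeta Q c \<beta>) (Zb v Vc) (zdual Q c v \<zeta>))
       \<and> (\<exists>\<beta>c>0. \<forall>\<beta> \<zeta>. \<beta> \<ge> \<beta>c \<longrightarrow> is_max_on (Pd_beta Q c v Vc \<beta>) (Sa_plus Q) \<zeta> \<longrightarrow>
            zdual Q c v \<zeta> \<in> Za v Vc \<longrightarrow>
              is_min_on (Pq Q c) (Za v Vc) (zdual Q c v \<zeta>)
            \<and> Pq Q c (zdual Q c v \<zeta>) = (INF z\<in>Zb v Vc. Pbeta Q c \<beta> z)
            \<and> (INF z\<in>Zb v Vc. Pbeta Q c \<beta> z) = Xi Q c v Vc \<beta> (zdual Q c v \<zeta>) \<zeta>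
            \<and> Xi Q c v Vc \<beta> (zdual Q c v \<zeta>) \<zeta> = (SUP \<xi>\<in>Sa_plus Q. Pd_beta Q c v Vc \<beta> \<xi>)
            \<and> (SUP \<xi>\<in>Sa_plus Q. Pd_beta Q c v Vc \<beta> \<xi>) = Pd_q Q c v Vc \<zeta>)"
  using Pd_beta_max_saddle(4)[OF symQ] Pd_beta_max_binary_strong_duality[OF symQ]
  by (intro conjI allI impI exI[of _ "1::real"]) (auto dest: order.strict_trans2[OF zero_less_one])

end
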